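(* Let $f$ be a derivation of a commutator semi-lattice $(X,\leq,\cdot)$. Then for all $a,b\in X$ and every non-negative integer $n$, $$f^n(a\cdot b)\leq \bigvee_{i=0}^n f^i(a)\cdot f^{n-i}(b),$$ where $f^0$ denotes the identity map.
   Context: A join semi-lattice is a poset $(X,\leq)$ with a binary operation $\vee$ that is idempotent, commutative and associative, such that $a\leq b \iff a\vee b=b$ for all $a,b\in X$. A commutator semi-lattice is a triple $(X,\leq,\cdot)$ where $(X,\leq,\vee)$ is a join semi-lattice and $\cdot$ is a binary operation on $X$ such that: $\cdot$ is commutative; $a\cdot b\leq b$ for all $a,b$; and $a\cdot(b\vee c)=(a\cdot b)\vee(a\cdot c)$ for all $a,b,c$. A derivation of a commutator semi-lattice is a map $f:X\to X$ preserving joins ($f(a\vee b)=f(a)\vee f(b)$) and satisfying $f(a\cdot b)\leq (f(a)\cdot b)\vee(a\cdot f(b))$ for all $a,b\in X$. *)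

theory Defs
  imports Main
begin

definition commutator_semilattice :: "('a::semilattice_sup \<Rightarrow> 'a \<Rightarrow> 'a) \<Rightarrow> bool" where
  "commutator_semilattice mult \<longleftrightarrow>
     (\<forall>a b. mult a b = mult b a) \<and>
     (\<forall>a b. mult a b \<le> b) \<and>
     (\<forall>a b c. mult a (sup b c) = sup (mult a b) (mult a c))"

definition derivation :: "('a::semilattice_sup \<Rightarrow> 'a \<Rightarrow> 'a) \<Rightarrow> ('a \<Rightarrow> 'a) \<Rightarrow> bool" where
  "derivation mult f \<longleftrightarrow>
     (\<forall>a b. f (sup a b) = sup (f a) (f b)) \<and>
     (\<forall>a b. f (mult a b) \<le> sup (mult (f a) b) (mult a (f b)))"

fun join_upto :: "(nat \<Rightarrow> 'a::semilattice_sup) \<Rightarrow> nat \<Rightarrow> 'a" where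
  "join_upto g 0 = g 0"
| "join_upto g (Suc n) = sup (join_upto g n) (g (Suc n))"

end

theory Submission
  imports Defs
begin

text \<open>Since f preserves joins it can be applied termwise to the n-th bound,
  and the derivation inequality splits the summand with index (i, n-i) into those with
  indices (i+1, n-i) and (i, n-i+1) of the next bound.\<close>

lemma join_upto_le_iff: "join_upto g n \<le> c \<longleftrightarrow> (\<forall>i\<le>n. g i \<le> c)"
  by (induction n) (auto simp: le_Suc_eq)

lemma join_upto_upper: "i \<le> n \<Longrightarrow> g i \<le> join_upto g n"
  by (induction n) (auto simp: le_Suc_eq intro: le_supI1)

lemma join_upto_map_sup_hom:
  assumes "\<And>x y. h (sup x y) = sup (h x) (h y)"
  shows "h (join_upto g n) = join_upto (\<lambda>i. h (g i)) n"
  by (induction n) (simp_all add: assms)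

lemma derivation_sup:
  "derivation mult f \<Longrightarrow> f (sup x y) = sup (f x) (f y)"
  by (simp add: derivation_def)

lemma derivation_mult_le:
  "derivation mult f \<Longrightarrow> f (mult x y) \<le> sup (mult (f x) y) (mult x (f y))"
  by (simp add: derivation_def)

lemma derivation_mono:
  "derivation mult f \<Longrightarrow> x \<le> y \<Longrightarrow> f x \<le> f y"
  by (metis derivation_sup le_iff_sup)

definition leibniz_bound ::
    "('a::semilattice_sup \<Rightarrow> 'a \<Rightarrow> 'a) \<Rightarrow> ('a \<Rightarrow> 'a) \<Rightarrow> 'a \<Rightarrow> 'a \<Rightarrow> nat \<Rightarrow> 'a" where
  "leibniz_bound mult f a b n = join_upto (\<lambda>i. mult ((f ^^ i) a) ((f ^^ (n - i)) b)) n"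

lemma leibniz_bound_term_le:
  "i \<le> n \<Longrightarrow> mult ((f ^^ i) a) ((f ^^ (n - i)) b) \<le> leibniz_bound mult f a b n"
  unfolding leibniz_bound_def by (rule join_upto_upper)

lemma derivation_leibniz_bound_step:
  assumes f: "derivation mult f"
  shows "f (leibniz_bound mult f a b n) \<le> leibniz_bound mult f a b (Suc n)"
proof -
  have "f (mult ((f ^^ i) a) ((f ^^ (n - i)) b)) \<le> leibniz_bound mult f a b (Suc n)"
    if i: "i \<le> n" for i
  proof -
    have left: "mult ((f ^^ Suc i) a) ((f ^^ (n - i)) b) \<le> leibniz_bound mult f a b (Suc n)"
      using leibniz_bound_term_le[of "Suc i" "Suc n"] i by simp
    have "Suc n - i = Suc (n - i)" using i by simp
    then have right: "mult ((f ^^ i) a) ((f ^^ Suc (n - i)) b) \<le> leibniz_bound mult f a b (Suc n)"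
      using leibniz_bound_term_le[of i "Suc n"] i by simp
    have "f (mult ((f ^^ i) a) ((f ^^ (n - i)) b))
        \<le> sup (mult ((f ^^ Suc i) a) ((f ^^ (n - i)) b)) (mult ((f ^^ i) a) ((f ^^ Suc (n - i)) b))"
      using derivation_mult_le[OF f] by simp
    then show ?thesis
      using le_supI[OF left right] by (rule order_trans)
  qed
  then show ?thesis
    unfolding leibniz_bound_def[of _ _ _ _ n]
      join_upto_map_sup_hom[OF derivation_sup[OF f]] join_upto_le_iff
    by blast
qed

lemma derivation_iter_mult_le:
  assumes "derivation mult f"
  shows "(f ^^ n) (mult a b) \<le> leibniz_bound mult f a b n"
proof (induction n)
  case 0
  show ?case by (simp add: leibniz_bound_def)
next
  case (Suc n)
  then have "(f ^^ Suc n) (mult a b) \<le> f (leibniz_bound mult f a b n)"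
    using derivation_mono[OF assms] by simp
  also have "\<dots> \<le> leibniz_bound mult f a b (Suc n)"
    using derivation_leibniz_bound_step[OF assms] .
  finally show ?case .
qed

theorem proposition2p9:
  fixes mult :: "'a::semilattice_sup \<Rightarrow> 'a \<Rightarrow> 'a" and f :: "'a \<Rightarrow> 'a"
  assumes "commutator_semilattice mult"
    and "derivation mult f"
  shows "\<forall>a b. \<forall>n::nat. (f ^^ n) (mult a b) \<le> join_upto (\<lambda>i. mult ((f ^^ i) a) ((f ^^ (n - i)) b)) n"
  using derivation_iter_mult_le[OF assms(2)] by (simp add: leibniz_bound_def)

end
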